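(* Let $G$ be a connected graph with vertex set $\{v_1,\dots,v_n\}$ and let $G^+$ be obtained from $G$ by adding new vertices $v_1^+,\dots,v_n^+$ and edges $v_iv_i^+$ ($i=1,\dots,n$). Let $Q$ be a clique separator of $G^+$ and let $M$ be the $Q$-attachedness graph of $G^+$. Then $M$ has no full antipodal triangle and no induced copy of $W^{(0)}_{2k+1}$ for any $k\ge 1$ if and only if $M$ has no induced copy of $W^{(0)}_{2k+1}$ for any $k\ge 1$.
   Context: Graphs are finite and simple. A clique is an inclusion-maximal set of pairwise adjacent vertices. For a connected graph $X$, a clique $Q$ of $X$ is a clique separator if $X-Q$ has at least two connected components; if their vertex sets are $V_1,\dots,V_s$, put $\gamma_i=X[V_i\cup Q]$ and $\Gamma_Q=\{\gamma_1,\dots,\gamma_s\}$. A relevant clique of $\gamma\in\Gamma_Q$ is a clique $K$ of the graph $\gamma$ with $K\cap Q\neq\emptyset$ and $K\neq Q$. An element $\gamma$ is a neighboring subgraph of a vertex $v$ if $v$ belongs to some relevant clique of $\gamma$; a set $W\subseteq\Gamma_Q$ is neighboring if there is $v\in Q$ such that every member of $W$ is a neighboring subgraph of $v$. Relations on $\Gamma_Q$: attachedness $\gamma\bowtie\gamma'$ iff there are relevant cliques $K$ of $\gamma$ and $K'$ of $\gamma'$ with $K\cap K'\cap Q\neq\emptyset$; dominance $\gamma\le\gamma'$ iff $\gamma\bowtie\gamma'$ and, for each relevant clique $K'$ of $\gamma'$, either $K\cap Q\subseteq K'\cap Q$ for every relevant clique $K$ of $\gamma$, or $K\cap K'\cap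 Q=\emptyset$ for every relevant clique $K$ of $\gamma$; antipodality $\gamma\leftrightarrow\gamma'$ iff there are relevant cliques $K$ of $\gamma$ and $K'$ of $\gamma'$ with $K\cap K'\cap Q\neq\emptyset$ and $K\cap Q$, $K'\cap Q$ inclusion-wise incomparable. Dominance is a preorder; by standing convention, elements $\gamma,\gamma'$ with $\gamma\le\gamma'$ and $\gamma'\le\gamma$ are identified (attachedness, antipodality and being neighboring are compatible with this identification). The $Q$-attachedness graph $M$ has vertex set $\Gamma_Q$ and an edge $\gamma\gamma'$ for each pair of distinct attached elements; it is 2-edge-colored: the edge is antipodal if $\gamma\leftrightarrow\gamma'$ and a dominance edge otherwise (then $\gamma\le\gamma'$ or $\gamma'\le\gamma$). A triangle of $M$ is full if its vertex set is a neighboring set; a full antipodal triangle is a full triangle all of whose edges are antipodal. $W^{(0)}_{2k+1}$ ($k\ge1$) is the 2-edge-colored wheel with hub $c$ and rim vertices $x_1,\dots,x_{2k+1}$, rim edges $x_ix_{i+1}$ (indices mod $2k+1$) antipodal and all spokes $cx_i$ dominance edges. An induced copy of a 2-edge-colored graph $F$ in $M$ is an injective map from $V(F)$ to $V(M)$ such that two vertices are adjacent in $F$ iff their images are adjacent in $M$, with the same edge color. *)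

theory Defs
  imports Main
begin

(* Every notion below only looks at E between vertices of the given vertex set,
   so "induced subgraph X[S]" is represented by the pair (S, E). *)

definition pw_adj :: "('v \<Rightarrow> 'v \<Rightarrow> bool) \<Rightarrow> 'v set \<Rightarrow> bool" where
  "pw_adj E K \<longleftrightarrow> (\<forall>x\<in>K. \<forall>y\<in>K. x \<noteq> y \<longrightarrow> E x y)"

definition is_clique :: "'v set \<Rightarrow> ('v \<Rightarrow> 'v \<Rightarrow> bool) \<Rightarrow> 'v set \<Rightarrow> bool" where
  "is_clique V E K \<longleftrightarrow> K \<subseteq> V \<and> pw_adj E K \<and>
     (\<forall>K'. K \<subseteq> K' \<and> K' \<subseteq> V \<and> pw_adj E K' \<longrightarrow> K' = K)"

definition reach :: "'v set \<Rightarrow> ('v \<Rightarrow> 'v \<Rightarrow> bool) \<Rightarrow> 'v \<Rightarrow> 'v \<Rightarrow> bool" where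
  "reach V E = (\<lambda>x y. x \<in> V \<and> y \<in> V \<and> E x y)\<^sup>*\<^sup>*"

definition connected_graph :: "'v set \<Rightarrow> ('v \<Rightarrow> 'v \<Rightarrow> bool) \<Rightarrow> bool" where
  "connected_graph V E \<longleftrightarrow> V \<noteq> {} \<and> (\<forall>x\<in>V. \<forall>y\<in>V. reach V E x y)"

definition components :: "'v set \<Rightarrow> ('v \<Rightarrow> 'v \<Rightarrow> bool) \<Rightarrow> 'v set set" where
  "components V E = {C. \<exists>x\<in>V. C = {y \<in> V. reach V E x y}}"

definition clique_separator :: "'v set \<Rightarrow> ('v \<Rightarrow> 'v \<Rightarrow> bool) \<Rightarrow> 'v set \<Rightarrow> bool" where
  "clique_separator V E Q \<longleftrightarrow> connected_graph V E \<and> is_clique V E Q \<and>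
     (\<exists>C1\<in>components (V - Q) E. \<exists>C2\<in>components (V - Q) E. C1 \<noteq> C2)"

(* Gamma_Q: an element gamma_i = X[V_i \<union> Q] is represented by the component V_i *)
definition Gamma :: "'v set \<Rightarrow> ('v \<Rightarrow> 'v \<Rightarrow> bool) \<Rightarrow> 'v set \<Rightarrow> 'v set set" where
  "Gamma V E Q = components (V - Q) E"

definition relevant :: "('v \<Rightarrow> 'v \<Rightarrow> bool) \<Rightarrow> 'v set \<Rightarrow> 'v set \<Rightarrow> 'v set \<Rightarrow> bool" where
  "relevant E Q C K \<longleftrightarrow> is_clique (C \<union> Q) E K \<and> K \<inter> Q \<noteq> {} \<and> K \<noteq> Q"

definition neighboring_sub :: "('v \<Rightarrow> 'v \<Rightarrow> bool) \<Rightarrow> 'v set \<Rightarrow> 'v set \<Rightarrow> 'v \<Rightarrow> bool" where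
  "neighboring_sub E Q C v \<longleftrightarrow> (\<exists>K. relevant E Q C K \<and> v \<in> K)"

definition attached :: "('v \<Rightarrow> 'v \<Rightarrow> bool) \<Rightarrow> 'v set \<Rightarrow> 'v set \<Rightarrow> 'v set \<Rightarrow> bool" where
  "attached E Q C C' \<longleftrightarrow> (\<exists>K K'. relevant E Q C K \<and> relevant E Q C' K' \<and> K \<inter> K' \<inter> Q \<noteq> {})"

definition dominated :: "('v \<Rightarrow> 'v \<Rightarrow> bool) \<Rightarrow> 'v set \<Rightarrow> 'v set \<Rightarrow> 'v set \<Rightarrow> bool" where
  "dominated E Q C C' \<longleftrightarrow> attached E Q C C' \<and>
     (\<forall>K'. relevant E Q C' K' \<longrightarrow>
        (\<forall>K. relevant E Q C K \<longrightarrow> K \<inter> Q \<subseteq> K' \<inter> Q) \<or>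
        (\<forall>K. relevant E Q C K \<longrightarrow> K \<inter> K' \<inter> Q = {}))"

definition antipodal :: "('v \<Rightarrow> 'v \<Rightarrow> bool) \<Rightarrow> 'v set \<Rightarrow> 'v set \<Rightarrow> 'v set \<Rightarrow> bool" where
  "antipodal E Q C C' \<longleftrightarrow> (\<exists>K K'. relevant E Q C K \<and> relevant E Q C' K' \<and>
     K \<inter> K' \<inter> Q \<noteq> {} \<and> \<not> (K \<inter> Q \<subseteq> K' \<inter> Q) \<and> \<not> (K' \<inter> Q \<subseteq> K \<inter> Q))"

(* identification of mutually dominating elements: vertices of M are the classes *)
definition dom_class :: "'v set \<Rightarrow> ('v \<Rightarrow> 'v \<Rightarrow> bool) \<Rightarrow> 'v set \<Rightarrow> 'v set \<Rightarrow> 'v set set" where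
  "dom_class V E Q C = {C' \<in> Gamma V E Q. C' = C \<or> (dominated E Q C C' \<and> dominated E Q C' C)}"

definition M_verts :: "'v set \<Rightarrow> ('v \<Rightarrow> 'v \<Rightarrow> bool) \<Rightarrow> 'v set \<Rightarrow> 'v set set set" where
  "M_verts V E Q = dom_class V E Q ` Gamma V E Q"

datatype ecolor = Antipodal | Dominance

definition M_edge :: "('v \<Rightarrow> 'v \<Rightarrow> bool) \<Rightarrow> 'v set \<Rightarrow> 'v set set \<Rightarrow> 'v set set \<Rightarrow> ecolor option" where
  "M_edge E Q A B =
     (if A \<noteq> B \<and> (\<exists>C\<in>A. \<exists>C'\<in>B. attached E Q C C')
      then Some (if (\<exists>C\<in>A. \<exists>C'\<in>B. antipodal E Q C C') then Antipodal else Dominance)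
      else None)"

definition neighboring_set :: "('v \<Rightarrow> 'v \<Rightarrow> bool) \<Rightarrow> 'v set \<Rightarrow> 'v set set set \<Rightarrow> bool" where
  "neighboring_set E Q W \<longleftrightarrow> (\<exists>v\<in>Q. \<forall>A\<in>W. \<exists>C\<in>A. neighboring_sub E Q C v)"

definition has_full_antipodal_triangle :: "'v set \<Rightarrow> ('v \<Rightarrow> 'v \<Rightarrow> bool) \<Rightarrow> 'v set \<Rightarrow> bool" where
  "has_full_antipodal_triangle V E Q \<longleftrightarrow>
     (\<exists>A\<in>M_verts V E Q. \<exists>B\<in>M_verts V E Q. \<exists>D\<in>M_verts V E Q.
        A \<noteq> B \<and> B \<noteq> D \<and> A \<noteq> D \<and>
        M_edge E Q A B = Some Antipodal \<and> M_edge E Q B D = Some Antipodal \<and>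
        M_edge E Q A D = Some Antipodal \<and> neighboring_set E Q {A, B, D})"

(* W^(0)_{2k+1}: rim vertices 0..2k, hub 2k+1 *)
definition wheel_verts :: "nat \<Rightarrow> nat set" where
  "wheel_verts k = {0..2*k+1}"

definition wheel_edge :: "nat \<Rightarrow> nat \<Rightarrow> nat \<Rightarrow> ecolor option" where
  "wheel_edge k i j =
     (let n = 2*k+1 in
      if i = j then None
      else if i = n \<or> j = n then Some Dominance
      else if j = (i + 1) mod n \<or> i = (j + 1) mod n then Some Antipodal
      else None)"

definition has_induced_wheel :: "'v set \<Rightarrow> ('v \<Rightarrow> 'v \<Rightarrow> bool) \<Rightarrow> 'v set \<Rightarrow> nat \<Rightarrow> bool" where
  "has_induced_wheel V E Q k \<longleftrightarrow>
     (\<exists>f. inj_on f (wheel_verts k) \<and> f ` wheel_verts k \<subseteq> M_verts V E Q \<and>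
        (\<forall>i\<in>wheel_verts k. \<forall>j\<in>wheel_verts k. i \<noteq> j \<longrightarrow>
            M_edge E Q (f i) (f j) = wheel_edge k i j))"

(* G^+: Inl v = v, Inr v = v^+ *)
definition plus_verts :: "'a set \<Rightarrow> ('a + 'a) set" where
  "plus_verts V = Inl ` V \<union> Inr ` V"

fun plus_edge :: "('a \<Rightarrow> 'a \<Rightarrow> bool) \<Rightarrow> 'a + 'a \<Rightarrow> 'a + 'a \<Rightarrow> bool" where
  "plus_edge E (Inl u) (Inl w) = E u w"
| "plus_edge E (Inl u) (Inr w) = (u = w)"
| "plus_edge E (Inr u) (Inl w) = (u = w)"
| "plus_edge E (Inr u) (Inr w) = False"

end

theory Submission
  imports Defs
begin

(* Let v in Q be the common vertex of a full antipodal triangle.  If Q contained a pendant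
   vertex a+, then |Q| <= 2 and no two relevant cliques could have incomparable traces on Q;
   so v is an original vertex a and its pendant a+ lies outside Q.  The component {a+}
   meets Q only in v, hence so does every element of its dominance class: that class is
   antipodal to nothing, yet attached to each vertex of the triangle through v.  It is thus
   the dominance hub of an induced W_3^(0), so the wheel condition alone already excludes
   full antipodal triangles. *)

lemma attached_sym: "attached R Q C C' \<longleftrightarrow> attached R Q C' C"
  unfolding attached_def by blast

lemma antipodal_sym: "antipodal R Q C C' \<longleftrightarrow> antipodal R Q C' C"
  unfolding antipodal_def by blast

lemma M_edge_sym: "M_edge R Q X Y = M_edge R Q Y X"
proof -
  have "(\<exists>C\<in>X. \<exists>C'\<in>Y. attached R Q C C') \<longleftrightarrow> (\<exists>C\<in>Y. \<exists>C'\<in>X. attached R Q C C')"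
    using attached_sym by blast
  moreover have "(\<exists>C\<in>X. \<exists>C'\<in>Y. antipodal R Q C C') \<longleftrightarrow> (\<exists>C\<in>Y. \<exists>C'\<in>X. antipodal R Q C C')"
    using antipodal_sym by blast
  ultimately show ?thesis
    unfolding M_edge_def by auto
qed

lemma M_edge_AntipodalD:
  "M_edge R Q X Y = Some Antipodal \<Longrightarrow> \<exists>C\<in>X. \<exists>C'\<in>Y. antipodal R Q C C'"
  by (auto simp: M_edge_def split: if_splits)

lemma M_verts_subset_Gamma: "X \<in> M_verts W R Q \<Longrightarrow> X \<subseteq> Gamma W R Q"
  by (auto simp: M_verts_def dom_class_def)

lemma Gamma_subset: "C \<in> Gamma W R Q \<Longrightarrow> C \<subseteq> W - Q"
  by (auto simp: Gamma_def components_def)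

lemma relevant_not_subset:
  assumes "relevant R Q C K" and "pw_adj R Q"
  shows "\<not> K \<subseteq> Q"
proof
  assume "K \<subseteq> Q"
  with assms have "Q = K"
    unfolding relevant_def is_clique_def by blast
  with assms(1) show False
    unfolding relevant_def by simp
qed

lemma relevant_not_superset:
  assumes "is_clique W R Q" and "C \<subseteq> W" and "relevant R Q C K"
  shows "\<not> Q \<subseteq> K"
proof
  assume "Q \<subseteq> K"
  have "K \<subseteq> W" "pw_adj R K"
    using assms unfolding relevant_def is_clique_def by auto
  with \<open>Q \<subseteq> K\<close> assms(1) have "K = Q"
    unfolding is_clique_def by blast
  with assms(3) show False
    unfolding relevant_def by simp
qed

text \<open>Relevant cliques never contain all of \<open>Q\<close>, so two incomparable traces that meet
  need at least three vertices of \<open>Q\<close>.\<close>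

lemma not_antipodal_if_clique_subset_doubleton:
  assumes "is_clique W R Q" and "Q \<subseteq> {x, y}" and "C \<subseteq> W" and "C' \<subseteq> W"
  shows "\<not> antipodal R Q C C'"
proof
  assume "antipodal R Q C C'"
  then obtain K K' where "relevant R Q C K" "relevant R Q C' K'"
    and "K \<inter> K' \<inter> Q \<noteq> {}" "\<not> K \<inter> Q \<subseteq> K' \<inter> Q" "\<not> K' \<inter> Q \<subseteq> K \<inter> Q"
    unfolding antipodal_def by blast
  moreover from this have "\<not> Q \<subseteq> K" "\<not> Q \<subseteq> K'"
    using relevant_not_superset assms by blast+
  ultimately show False
    using assms(2) by blast
qed

definition touches_only_at :: "('v \<Rightarrow> 'v \<Rightarrow> bool) \<Rightarrow> 'v set \<Rightarrow> 'v set \<Rightarrow> 'v \<Rightarrow> bool" where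
  "touches_only_at R Q C v \<longleftrightarrow> (\<forall>K. relevant R Q C K \<longrightarrow> K \<inter> Q \<subseteq> {v})"

lemma not_antipodal_if_touches_only_at:
  assumes "touches_only_at R Q C v"
  shows "\<not> antipodal R Q C X" and "\<not> antipodal R Q X C"
proof -
  have "\<not> antipodal R Q C X" for X
  proof
    assume "antipodal R Q C X"
    then obtain K K' where "relevant R Q C K" and "K \<inter> K' \<inter> Q \<noteq> {}"
      and "\<not> K \<inter> Q \<subseteq> K' \<inter> Q"
      unfolding antipodal_def by blast
    moreover from this have "K \<inter> Q \<subseteq> {v}"
      using assms unfolding touches_only_at_def by blast
    ultimately show False
      by blast
  qed
  then show "\<not> antipodal R Q C X" and "\<not> antipodal R Q X C"
    using antipodal_sym by metis+
qed

lemma touches_only_at_if_dominated: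
  assumes P: "touches_only_at R Q P v" and dom: "dominated R Q C P"
  shows "touches_only_at R Q C v"
proof -
  obtain K K' where K: "relevant R Q C K" and K': "relevant R Q P K'"
    and meet: "K \<inter> K' \<inter> Q \<noteq> {}"
    using dom unfolding dominated_def attached_def by blast
  have "K' \<inter> Q \<subseteq> {v}"
    using P K' unfolding touches_only_at_def by blast
  have "(\<forall>L. relevant R Q C L \<longrightarrow> L \<inter> Q \<subseteq> K' \<inter> Q) \<or>
        (\<forall>L. relevant R Q C L \<longrightarrow> L \<inter> K' \<inter> Q = {})"
    using dom K' unfolding dominated_def by blast
  with K meet have "\<forall>L. relevant R Q C L \<longrightarrow> L \<inter> Q \<subseteq> K' \<inter> Q"
    by blast
  with \<open>K' \<inter> Q \<subseteq> {v}\<close> show ?thesis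
    unfolding touches_only_at_def by blast
qed

lemma touches_only_at_dom_class:
  "touches_only_at R Q P v \<Longrightarrow> C \<in> dom_class W R Q P \<Longrightarrow> touches_only_at R Q C v"
  unfolding dom_class_def by (auto intro: touches_only_at_if_dominated)

lemma M_edge_Dominance_at_touching_class:
  assumes H: "\<forall>C\<in>H. touches_only_at R Q C v" and "P \<in> H" and "neighboring_sub R Q P v"
    and "C \<in> X" and "neighboring_sub R Q C v" and "H \<noteq> X"
  shows "M_edge R Q H X = Some Dominance"
proof -
  obtain K K' where K: "relevant R Q P K" "v \<in> K" and K': "relevant R Q C K'" "v \<in> K'"
    using assms(3,5) unfolding neighboring_sub_def by blast
  have "K \<inter> Q \<subseteq> {v}"
    using H \<open>P \<in> H\<close> K(1) unfolding touches_only_at_def by blast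
  moreover have "K \<inter> Q \<noteq> {}"
    using K(1) unfolding relevant_def by blast
  ultimately have "v \<in> K \<inter> K' \<inter> Q"
    using K(2) K'(2) by blast
  then have "attached R Q P C"
    unfolding attached_def using K(1) K'(1) by blast
  moreover have "\<not> antipodal R Q C' C''" if "C' \<in> H" for C' C''
    using H that not_antipodal_if_touches_only_at by metis
  ultimately show ?thesis
    using \<open>P \<in> H\<close> \<open>C \<in> X\<close> \<open>H \<noteq> X\<close> unfolding M_edge_def by auto
qed

lemma induced_wheel_1I:
  assumes "{A, B, D, H} \<subseteq> M_verts W R Q"
    and "A \<noteq> B" "B \<noteq> D" "A \<noteq> D" "H \<noteq> A" "H \<noteq> B" "H \<noteq> D"
    and "M_edge R Q A B = Some Antipodal" "M_edge R Q B D = Some Antipodal"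
      "M_edge R Q A D = Some Antipodal"
    and "M_edge R Q H A = Some Dominance" "M_edge R Q H B = Some Dominance"
      "M_edge R Q H D = Some Dominance"
  shows "has_induced_wheel W R Q 1"
proof -
  define f where "f = (\<lambda>i::nat. if i = 0 then A else if i = 1 then B else if i = 2 then D else H)"
  have "wheel_verts 1 = {0, 1, 2, 3}"
    unfolding wheel_verts_def by auto
  moreover have "inj_on f {0, 1, 2, 3}"
    using assms unfolding f_def inj_on_def by auto
  moreover have "f ` {0, 1, 2, 3} \<subseteq> M_verts W R Q"
    using assms(1) unfolding f_def by auto
  moreover have "M_edge R Q (f i) (f j) = wheel_edge 1 i j"
    if "i \<in> {0, 1, 2, 3}" "j \<in> {0, 1, 2, 3}" "i \<noteq> j" for i j
    using that assms(8-) M_edge_sym[of R Q]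
    unfolding f_def wheel_edge_def Let_def by auto
  ultimately show ?thesis
    unfolding has_induced_wheel_def by metis
qed

lemma induced_wheel_if_touching_class:
  assumes "has_full_antipodal_triangle W R Q"
    and touching_class: "\<And>v. v \<in> Q \<Longrightarrow> \<exists>H\<in>M_verts W R Q. \<exists>P\<in>H.
      neighboring_sub R Q P v \<and> (\<forall>C\<in>H. touches_only_at R Q C v)"
  shows "has_induced_wheel W R Q 1"
proof -
  obtain A B D v where M: "A \<in> M_verts W R Q" "B \<in> M_verts W R Q" "D \<in> M_verts W R Q"
    and distinct: "A \<noteq> B" "B \<noteq> D" "A \<noteq> D"
    and AB: "M_edge R Q A B = Some Antipodal" and BD: "M_edge R Q B D = Some Antipodal"
    and AD: "M_edge R Q A D = Some Antipodal" and "v \<in> Q"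
    and nb: "\<forall>X\<in>{A, B, D}. \<exists>C\<in>X. neighboring_sub R Q C v"
    using assms(1) unfolding has_full_antipodal_triangle_def neighboring_set_def
    by (elim bexE conjE) (rule that, assumption+)
  obtain H P where "H \<in> M_verts W R Q" "P \<in> H" "neighboring_sub R Q P v"
    and touch: "\<forall>C\<in>H. touches_only_at R Q C v"
    using touching_class[OF \<open>v \<in> Q\<close>] by blast
  obtain C1 C2 where "C1 \<in> A" "C2 \<in> B" and C12: "antipodal R Q C1 C2"
    using M_edge_AntipodalD[OF AB] by blast
  obtain C3 C4 where "C3 \<in> B" "C4 \<in> D" and C34: "antipodal R Q C3 C4"
    using M_edge_AntipodalD[OF BD] by blast
  have "H \<noteq> A" "H \<noteq> B" "H \<noteq> D"
    using touch not_antipodal_if_touches_only_at C12 C34 \<open>C1 \<in> A\<close> \<open>C3 \<in> B\<close> \<open>C4 \<in> D\<close>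
    by metis+
  have hub: "M_edge R Q H X = Some Dominance" if X: "X \<in> {A, B, D}" "H \<noteq> X" for X
  proof -
    obtain C where "C \<in> X" and "neighboring_sub R Q C v"
      using bspec[OF nb X(1)] by blast
    then show ?thesis
      by (rule M_edge_Dominance_at_touching_class[OF touch \<open>P \<in> H\<close> \<open>neighboring_sub R Q P v\<close>
            _ _ X(2)])
  qed
  show ?thesis
  proof (rule induced_wheel_1I[OF _ distinct _ _ _ AB BD AD])
    show "{A, B, D, H} \<subseteq> M_verts W R Q"
      using M \<open>H \<in> M_verts W R Q\<close> by simp
  qed (use \<open>H \<noteq> A\<close> \<open>H \<noteq> B\<close> \<open>H \<noteq> D\<close> hub in auto)
qed

lemma plus_edge_Inr_left: "plus_edge E (Inr a) z \<longleftrightarrow> z = Inl a"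
  by (cases z) auto

lemma pw_adj_plus_edge_Inr:
  assumes "pw_adj (plus_edge E) K" and "Inr a \<in> K"
  shows "K \<subseteq> {Inl a, Inr a}"
  using assms unfolding pw_adj_def by (metis insertCI plus_edge_Inr_left subsetI)

lemma singleton_Inr_component:
  assumes "Inr a \<in> U" and "Inl a \<notin> U"
  shows "{Inr a} \<in> components U (plus_edge E)"
proof -
  have "y = Inr a" if "reach U (plus_edge E) (Inr a) y" for y
    using that unfolding reach_def
  proof (induction rule: rtranclp_induct)
    case (step y z)
    then show ?case
      using assms(2) by (auto simp: plus_edge_Inr_left)
  qed simp
  then have "{Inr a} = {y \<in> U. reach U (plus_edge E) (Inr a) y}"
    using assms(1) unfolding reach_def by auto
  then show ?thesis
    using assms(1) unfolding components_def by blast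
qed

lemma relevant_pendant:
  assumes "Inl a \<in> Q" and "Inr a \<notin> Q"
  shows "relevant (plus_edge E) Q {Inr a} {Inl a, Inr a}"
  unfolding relevant_def is_clique_def
proof (intro conjI allI impI)
  show "pw_adj (plus_edge E) {Inl a, Inr a}"
    unfolding pw_adj_def by auto
  fix K
  assume K: "{Inl a, Inr a} \<subseteq> K \<and> K \<subseteq> {Inr a} \<union> Q \<and> pw_adj (plus_edge E) K"
  then have "K \<subseteq> {Inl a, Inr a}"
    using pw_adj_plus_edge_Inr[of E K a] by simp
  with K show "K = {Inl a, Inr a}"
    by blast
qed (use assms in auto)

lemma pendant_touches_only_at:
  assumes "pw_adj (plus_edge E) Q" and "Inr a \<notin> Q"
  shows "touches_only_at (plus_edge E) Q {Inr a} (Inl a)"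
  unfolding touches_only_at_def
proof (intro allI impI)
  fix K
  assume K: "relevant (plus_edge E) Q {Inr a} K"
  then have "K \<subseteq> {Inr a} \<union> Q" and "pw_adj (plus_edge E) K"
    unfolding relevant_def is_clique_def by simp_all
  moreover have "\<not> K \<subseteq> Q"
    using relevant_not_subset[OF K assms(1)] .
  ultimately have "K \<subseteq> {Inl a, Inr a}"
    using pw_adj_plus_edge_Inr[of E K a] by blast
  then show "K \<inter> Q \<subseteq> {Inl a}"
    using assms(2) by blast
qed

lemma Inr_notin_clique_if_antipodal:
  assumes cl: "is_clique (plus_verts V) (plus_edge E) Q"
    and "C \<in> Gamma (plus_verts V) (plus_edge E) Q" "C' \<in> Gamma (plus_verts V) (plus_edge E) Q"
    and "antipodal (plus_edge E) Q C C'"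
  shows "Inr b \<notin> Q"
proof
  assume "Inr b \<in> Q"
  have "pw_adj (plus_edge E) Q"
    using cl unfolding is_clique_def by simp
  then have "Q \<subseteq> {Inl b, Inr b}"
    using \<open>Inr b \<in> Q\<close> by (rule pw_adj_plus_edge_Inr)
  moreover have "C \<subseteq> plus_verts V" "C' \<subseteq> plus_verts V"
    using Gamma_subset[OF assms(2)] Gamma_subset[OF assms(3)] by blast+
  ultimately show False
    using assms(4) not_antipodal_if_clique_subset_doubleton[OF cl] by metis
qed

lemma pendant_class_touches_only_at:
  assumes cl: "is_clique (plus_verts V) (plus_edge E) Q"
    and "Inl a \<in> Q" and "Inr a \<notin> Q"
  shows "\<exists>H\<in>M_verts (plus_verts V) (plus_edge E) Q. \<exists>P\<in>H.
    neighboring_sub (plus_edge E) Q P (Inl a) \<and> (\<forall>C\<in>H. touches_only_at (plus_edge E) Q C (Inl a))"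
proof -
  let ?W = "plus_verts V" and ?R = "plus_edge E"
  have pwQ: "pw_adj ?R Q" and "Q \<subseteq> ?W"
    using cl unfolding is_clique_def by auto
  with assms(2,3) have "Inr a \<in> ?W - Q"
    unfolding plus_verts_def by auto
  moreover have "Inl a \<notin> ?W - Q"
    using assms(2) by simp
  ultimately have P: "{Inr a} \<in> Gamma ?W ?R Q"
    unfolding Gamma_def by (rule singleton_Inr_component)
  define H where "H = dom_class ?W ?R Q {Inr a}"
  have "H \<in> M_verts ?W ?R Q" and "{Inr a} \<in> H"
    unfolding H_def M_verts_def dom_class_def using P by auto
  moreover have "neighboring_sub ?R Q {Inr a} (Inl a)"
    using relevant_pendant[OF assms(2,3)] unfolding neighboring_sub_def by blast
  moreover have "\<forall>C\<in>H. touches_only_at ?R Q C (Inl a)"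
    unfolding H_def
    using touches_only_at_dom_class[OF pendant_touches_only_at[OF pwQ assms(3)]] by blast
  ultimately show ?thesis
    by blast
qed

lemma full_antipodal_triangle_imp_induced_wheel:
  assumes cl: "is_clique (plus_verts V) (plus_edge E) Q"
    and triangle: "has_full_antipodal_triangle (plus_verts V) (plus_edge E) Q"
  shows "has_induced_wheel (plus_verts V) (plus_edge E) Q 1"
proof (rule induced_wheel_if_touching_class[OF triangle])
  obtain X Y where X: "X \<in> M_verts (plus_verts V) (plus_edge E) Q"
    and Y: "Y \<in> M_verts (plus_verts V) (plus_edge E) Q"
    and "M_edge (plus_edge E) Q X Y = Some Antipodal"
    using triangle unfolding has_full_antipodal_triangle_def by blast
  then obtain C C' where "C \<in> X" "C' \<in> Y" and "antipodal (plus_edge E) Q C C'"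
    by (blast dest: M_edge_AntipodalD)
  then have no_Inr: "Inr b \<notin> Q" for b
    using Inr_notin_clique_if_antipodal[OF cl]
      M_verts_subset_Gamma[OF X] M_verts_subset_Gamma[OF Y] by blast
  fix v
  assume "v \<in> Q"
  with no_Inr obtain a where "v = Inl a"
    by (cases v) auto
  with \<open>v \<in> Q\<close> show "\<exists>H\<in>M_verts (plus_verts V) (plus_edge E) Q. \<exists>P\<in>H.
      neighboring_sub (plus_edge E) Q P v \<and> (\<forall>C\<in>H. touches_only_at (plus_edge E) Q C v)"
    using pendant_class_touches_only_at[OF cl _ no_Inr] by blast
qed

theorem lemma4p3:
  fixes V :: "'a set" and E :: "'a \<Rightarrow> 'a \<Rightarrow> bool" and Q :: "('a + 'a) set"
  assumes "finite V"
    and "\<And>u w. E u w \<Longrightarrow> E w u"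
    and "\<And>u. \<not> E u u"
    and "connected_graph V E"
    and "clique_separator (plus_verts V) (plus_edge E) Q"
  shows "(\<not> has_full_antipodal_triangle (plus_verts V) (plus_edge E) Q \<and>
          \<not> (\<exists>k\<ge>1. has_induced_wheel (plus_verts V) (plus_edge E) Q k))
         \<longleftrightarrow> \<not> (\<exists>k\<ge>1. has_induced_wheel (plus_verts V) (plus_edge E) Q k)"
proof -
  have "is_clique (plus_verts V) (plus_edge E) Q"
    using assms(5) unfolding clique_separator_def by simp
  then show ?thesis
    using full_antipodal_triangle_imp_induced_wheel by blast
qed

end
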